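(* Let $1\le r\le m$ and assume $\lambda_r>0$ and $\widehat\lambda_r>0$. Then $$\|\widehat K_r-K_r\|_F\le\sqrt{\lambda_1N}\,\|\Delta H\|_2\le N\|\Delta H\|_2.$$
   Context: Let $\mathcal X$ be a set and $\kappa:\mathcal X\times\mathcal X\to\mathbb R$ a positive semidefinite kernel with $\kappa(\mathbf x,\mathbf x)\le 1$ for all $\mathbf x$. Let $\mathcal H_\kappa$ be its RKHS, with inner product $\langle\cdot,\cdot\rangle$. Let $\mathcal D=\{\mathbf x_1,\ldots,\mathbf x_N\}\subset\mathcal X$ and $K=[\kappa(\mathbf x_i,\mathbf x_j)]_{N\times N}$. Assume $K$ is positive definite, with eigenvalues $\lambda_1\ge\cdots\ge\lambda_N>0$ and orthonormal eigenvectors $\mathbf v_i$. Put $V_{i,j}=[(\mathbf v_1,\ldots,\mathbf v_N)]_{i,j}$ and $K_r=\sum_{i=1}^r\lambda_i\mathbf v_i\mathbf v_i^\top$. Let $\widehat{\mathbf x}_1,\ldots,\widehat{\mathbf x}_m$ be points sampled uniformly from $\mathcal D$. Let $\widehat K=[\kappa(\widehat{\mathbf x}_i,\widehat{\mathbf x}_j)]_{m\times m}$, with eigenvalues $\widehat\lambda_1\ge\cdots\ge\widehat\lambda_m$ and orthonormal eigenvectors $\mathbf u_i$. Put $U_{i,j}=[(\mathbf u_1,\ldots,\mathbf u_r)]_{i,j}$. Define $$\widehat W=\sum_{i=1}^r\widehat\lambda_i^{-1}\mathbf u_i\mathbf u_i^\top,\qquad K_b=[\kappa(\mathbf x_i,\widehat{\mathbf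 x}_j)]_{N\times m},\qquad \widehat K_r=K_b\widehat WK_b^\top.$$ Define $$\varphi_j=\lambda_j^{-1/2}\sum_{i=1}^N V_{i,j}\kappa(\mathbf x_i,\cdot)\quad(j\in[N]),\qquad \widehat\varphi_j=\widehat\lambda_j^{-1/2}\sum_{i=1}^m U_{i,j}\kappa(\widehat{\mathbf x}_i,\cdot)\quad(j\le r).$$ Define $H_r[f]=\sum_{i=1}^r\varphi_i\langle\varphi_i,f\rangle$, $\widehat H_r[f]=\sum_{i=1}^r\widehat\varphi_i\langle\widehat\varphi_i,f\rangle$, and $\Delta H=H_r-\widehat H_r$. Here $\|\cdot\|_2$ denotes the operator (spectral) norm on $\mathcal H_\kappa$, and $\|\cdot\|_F$ the Frobenius norm. *)

theory Defs
  imports "HOL-Analysis.Analysis"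
begin

text \<open>Conventions: all indices are 1-based as in the paper. An N x N matrix is a
function nat => nat => real, only entries with indices in {1..N} matter.
An eigenvector family v is indexed as v j i = i-th component of the j-th eigenvector,
so the paper's V_{i,j} is v j i.\<close>

definition psd_kernel :: "('a \<Rightarrow> 'a \<Rightarrow> real) \<Rightarrow> bool" where
  "psd_kernel \<kappa> \<longleftrightarrow> (\<forall>x y. \<kappa> x y = \<kappa> y x) \<and>
     (\<forall>n (p :: nat \<Rightarrow> 'a) (c :: nat \<Rightarrow> real).
        0 \<le> (\<Sum>i\<in>{1..n}. \<Sum>j\<in>{1..n}. c i * c j * \<kappa> (p i) (p j)))"

text \<open>(H, Phi) realises the RKHS of kappa: Phi x plays the role of kappa(x, .),
reproducing inner products, and the span of the Phi x is dense, so H is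
isometrically isomorphic to the RKHS H_kappa.\<close>
definition rkhs_realisation :: "('a \<Rightarrow> 'a \<Rightarrow> real) \<Rightarrow> ('a \<Rightarrow> 'h::{real_inner,complete_space}) \<Rightarrow> bool" where
  "rkhs_realisation \<kappa> \<Phi> \<longleftrightarrow> (\<forall>x y. \<kappa> x y = inner (\<Phi> x) (\<Phi> y)) \<and>
     closure (span (range \<Phi>)) = UNIV"

definition gram :: "('a \<Rightarrow> 'a \<Rightarrow> real) \<Rightarrow> (nat \<Rightarrow> 'a) \<Rightarrow> nat \<Rightarrow> nat \<Rightarrow> real" where
  "gram \<kappa> p i j = \<kappa> (p i) (p j)"

definition sorted_eigendecomp ::
  "nat \<Rightarrow> (nat \<Rightarrow> nat \<Rightarrow> real) \<Rightarrow> (nat \<Rightarrow> real) \<Rightarrow> (nat \<Rightarrow> nat \<Rightarrow> real) \<Rightarrow> bool" where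
  "sorted_eigendecomp n A lam v \<longleftrightarrow>
     (\<forall>j\<in>{1..n}. \<forall>k\<in>{1..n}. (\<Sum>i\<in>{1..n}. A k i * v j i) = lam j * v j k) \<and>
     (\<forall>j\<in>{1..n}. \<forall>l\<in>{1..n}. (\<Sum>i\<in>{1..n}. v j i * v l i) = (if j = l then 1 else 0)) \<and>
     (\<forall>j\<in>{1..n}. \<forall>l\<in>{1..n}. j \<le> l \<longrightarrow> lam l \<le> lam j)"

definition pos_def_mat :: "nat \<Rightarrow> (nat \<Rightarrow> nat \<Rightarrow> real) \<Rightarrow> bool" where
  "pos_def_mat n A \<longleftrightarrow> (\<forall>i\<in>{1..n}. \<forall>j\<in>{1..n}. A i j = A j i) \<and>
     (\<forall>c. (\<exists>i\<in>{1..n}. c i \<noteq> 0) \<longrightarrow> 0 < (\<Sum>i\<in>{1..n}. \<Sum>j\<in>{1..n}. c i * A i j * c j))"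

definition frob_norm :: "nat \<Rightarrow> nat \<Rightarrow> (nat \<Rightarrow> nat \<Rightarrow> real) \<Rightarrow> real" where
  "frob_norm n k A = sqrt (\<Sum>i\<in>{1..n}. \<Sum>j\<in>{1..k}. (A i j)\<^sup>2)"

definition trunc_mat :: "nat \<Rightarrow> (nat \<Rightarrow> real) \<Rightarrow> (nat \<Rightarrow> nat \<Rightarrow> real) \<Rightarrow> nat \<Rightarrow> nat \<Rightarrow> real" where
  "trunc_mat r lam v a b = (\<Sum>i\<in>{1..r}. lam i * v i a * v i b)"

definition trunc_pinv :: "nat \<Rightarrow> (nat \<Rightarrow> real) \<Rightarrow> (nat \<Rightarrow> nat \<Rightarrow> real) \<Rightarrow> nat \<Rightarrow> nat \<Rightarrow> real" where
  "trunc_pinv r lam u a b = (\<Sum>i\<in>{1..r}. inverse (lam i) * u i a * u i b)"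

definition nystrom :: "('a \<Rightarrow> 'a \<Rightarrow> real) \<Rightarrow> (nat \<Rightarrow> 'a) \<Rightarrow> nat \<Rightarrow> (nat \<Rightarrow> 'a)
     \<Rightarrow> (nat \<Rightarrow> nat \<Rightarrow> real) \<Rightarrow> nat \<Rightarrow> nat \<Rightarrow> real" where
  "nystrom \<kappa> x m xh W i j =
     (\<Sum>a\<in>{1..m}. \<Sum>b\<in>{1..m}. \<kappa> (x i) (xh a) * W a b * \<kappa> (x j) (xh b))"

definition eigfun :: "('a \<Rightarrow> 'h::real_inner) \<Rightarrow> (nat \<Rightarrow> 'a) \<Rightarrow> nat \<Rightarrow> (nat \<Rightarrow> real)
     \<Rightarrow> (nat \<Rightarrow> nat \<Rightarrow> real) \<Rightarrow> nat \<Rightarrow> 'h" where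
  "eigfun \<Phi> p n lam v j = (1 / sqrt (lam j)) *\<^sub>R (\<Sum>i\<in>{1..n}. v j i *\<^sub>R \<Phi> (p i))"

definition proj_op :: "nat \<Rightarrow> (nat \<Rightarrow> 'h::real_inner) \<Rightarrow> 'h \<Rightarrow> 'h" where
  "proj_op r \<phi> f = (\<Sum>i\<in>{1..r}. inner (\<phi> i) f *\<^sub>R \<phi> i)"

end

theory Submission
  imports Defs "Jordan_Normal_Form.Determinant"
begin

(*
  Writing P_a for the feature vector kappa(x_a, .), both K_r and the Nystrom matrix K_b W K_b^T
  are matrices of the form [<P_a, T P_b>] with T = H_r resp. T = H_r-hat.  Hence every entry of
  K_r-hat - K_r equals -<P_a, Delta H P_b>.  Two facts about the Gram matrix K = [<P_a, P_b>]
  turn this entrywise description into the Frobenius bound: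
   (1) a frame bound  sum_a <P_a, g>^2 <= lambda_1 |g|^2, which follows from the Rayleigh bound
       c^T K c <= lambda_1 |c|^2 for the quadratic form of K, and
   (2) |P_b|^2 = kappa(x_b, x_b) <= 1, so |Delta H P_b| <= ||Delta H||_2.
  Summing over the columns b gives ||K_r-hat - K_r||_F^2 <= lambda_1 N ||Delta H||_2^2.  The second
  inequality is lambda_1 <= trace K <= N, since all eigenvalues of a Gram matrix are nonnegative.
*)

section \<open>Orthonormal eigenbases of matrices indexed by 1..n\<close>

definition eigenpairs ::
  "nat \<Rightarrow> (nat \<Rightarrow> nat \<Rightarrow> real) \<Rightarrow> (nat \<Rightarrow> real) \<Rightarrow> (nat \<Rightarrow> nat \<Rightarrow> real) \<Rightarrow> bool" where
  "eigenpairs n A lam v \<longleftrightarrow>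
     (\<forall>j\<in>{1..n}. \<forall>k\<in>{1..n}. (\<Sum>i\<in>{1..n}. A k i * v j i) = lam j * v j k)"

definition orthonormal_rows :: "nat \<Rightarrow> (nat \<Rightarrow> nat \<Rightarrow> real) \<Rightarrow> bool" where
  "orthonormal_rows n v \<longleftrightarrow>
     (\<forall>j\<in>{1..n}. \<forall>l\<in>{1..n}. (\<Sum>i\<in>{1..n}. v j i * v l i) = (if j = l then 1 else 0))"

lemma sorted_eigendecomp_iff:
  "sorted_eigendecomp n A lam v \<longleftrightarrow> eigenpairs n A lam v \<and> orthonormal_rows n v \<and>
     (\<forall>j\<in>{1..n}. \<forall>l\<in>{1..n}. j \<le> l \<longrightarrow> lam l \<le> lam j)"
  unfolding sorted_eigendecomp_def eigenpairs_def orthonormal_rows_def by blast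

lemma sorted_eigendecomp_pos_prefix:
  assumes "sorted_eigendecomp n A lam v" and "r \<le> n" and "0 < lam r"
  shows "\<forall>j\<in>{1..r}. 0 < lam j"
  using assms unfolding sorted_eigendecomp_def by (meson atLeastAtMost_iff dual_order.trans less_le_trans)

text \<open>n orthonormal vectors in R^n form an orthogonal matrix, so its columns are orthonormal too
  (a one-sided inverse of a square matrix is two-sided).\<close>
lemma orthonormal_rows_transpose:
  assumes rows: "orthonormal_rows n v"
  shows "orthonormal_rows n (\<lambda>a j. v j a)"
proof -
  define M where "M = mat n n (\<lambda>(i, j). v (Suc i) (Suc j))"
  have M: "M \<in> carrier_mat n n" "transpose_mat M \<in> carrier_mat n n"
    unfolding M_def by auto
  have entry: "(M * transpose_mat M) $$ (i, j) = (\<Sum>k\<in>{1..n}. v (Suc i) k * v (Suc j) k)"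
    and entry': "(transpose_mat M * M) $$ (i, j) = (\<Sum>k\<in>{1..n}. v k (Suc i) * v k (Suc j))"
    if "i < n" "j < n" for i j
    using that by (auto simp: M_def scalar_prod_def sum.atLeast1_atMost_eq intro!: sum.cong)
  have "M * transpose_mat M = 1\<^sub>m n"
  proof (rule eq_matI)
    fix i j assume "i < dim_row (1\<^sub>m n)" "j < dim_col (1\<^sub>m n)"
    then show "(M * transpose_mat M) $$ (i, j) = 1\<^sub>m n $$ (i, j)"
      using rows by (auto simp: entry orthonormal_rows_def)
  qed (auto simp: M_def)
  then have inv: "transpose_mat M * M = 1\<^sub>m n"
    using mat_mult_left_right_inverse M by blast
  show ?thesis unfolding orthonormal_rows_def
  proof (intro ballI)
    fix a b assume ab: "a \<in> {1..n}" "b \<in> {1..n}"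
    then have "(\<Sum>j\<in>{1..n}. v j a * v j b) = (transpose_mat M * M) $$ (a - 1, b - 1)"
      using entry'[of "a - 1" "b - 1"] by auto
    also have "\<dots> = (if a = b then 1 else 0)"
      using ab by (auto simp: inv)
    finally show "(\<Sum>j\<in>{1..n}. v j a * v j b) = (if a = b then 1 else 0)" .
  qed
qed

lemma orthonormal_expansion:
  assumes cols: "orthonormal_rows n (\<lambda>a j. v j a)" and i: "i \<in> {1..n}"
  shows "c i = (\<Sum>j\<in>{1..n}. (\<Sum>a\<in>{1..n}. c a * v j a) * v j i)"
proof -
  have "(\<Sum>j\<in>{1..n}. (\<Sum>a\<in>{1..n}. c a * v j a) * v j i)
      = (\<Sum>j\<in>{1..n}. \<Sum>a\<in>{1..n}. c a * (v j a * v j i))"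
    by (simp add: sum_distrib_right mult.assoc)
  also have "\<dots> = (\<Sum>a\<in>{1..n}. c a * (\<Sum>j\<in>{1..n}. v j a * v j i))"
    by (subst sum.swap) (simp add: sum_distrib_left)
  also have "\<dots> = (\<Sum>a\<in>{1..n}. c a * (if a = i then 1 else 0))"
    using cols i by (intro sum.cong) (auto simp: orthonormal_rows_def)
  also have "\<dots> = c i" using i by (simp add: if_distrib cong: if_cong)
  finally show ?thesis by simp
qed

lemma orthonormal_parseval:
  assumes cols: "orthonormal_rows n (\<lambda>a j. v j a)"
  shows "(\<Sum>j\<in>{1..n}. (\<Sum>a\<in>{1..n}. c a * v j a)\<^sup>2) = (\<Sum>k\<in>{1..n}. (c k)\<^sup>2)"
proof -
  define \<alpha> where "\<alpha> j = (\<Sum>a\<in>{1..n}. c a * v j a)" for j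
  have "(\<Sum>j\<in>{1..n}. (\<alpha> j)\<^sup>2) = (\<Sum>j\<in>{1..n}. \<Sum>a\<in>{1..n}. \<alpha> j * (c a * v j a))"
    by (simp add: power2_eq_square \<alpha>_def[of j for j] sum_distrib_left)
  also have "\<dots> = (\<Sum>a\<in>{1..n}. c a * (\<Sum>j\<in>{1..n}. \<alpha> j * v j a))"
    by (subst sum.swap) (simp add: sum_distrib_left mult_ac)
  also have "\<dots> = (\<Sum>k\<in>{1..n}. (c k)\<^sup>2)"
    using orthonormal_expansion[OF cols, of _ c]
    by (intro sum.cong) (auto simp: power2_eq_square \<alpha>_def)
  finally show ?thesis unfolding \<alpha>_def .
qed

lemma eigen_quadratic_form:
  assumes eig: "eigenpairs n A lam v" and cols: "orthonormal_rows n (\<lambda>a j. v j a)"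
  shows "(\<Sum>k\<in>{1..n}. \<Sum>i\<in>{1..n}. c k * A k i * c i)
       = (\<Sum>j\<in>{1..n}. lam j * (\<Sum>a\<in>{1..n}. c a * v j a)\<^sup>2)"
proof -
  define \<alpha> where "\<alpha> j = (\<Sum>a\<in>{1..n}. c a * v j a)" for j
  have Ac: "(\<Sum>i\<in>{1..n}. A k i * c i) = (\<Sum>j\<in>{1..n}. \<alpha> j * lam j * v j k)"
    if k: "k \<in> {1..n}" for k
proof -
    have "(\<Sum>i\<in>{1..n}. A k i * c i) = (\<Sum>i\<in>{1..n}. A k i * (\<Sum>j\<in>{1..n}. \<alpha> j * v j i))"
      unfolding \<alpha>_def using orthonormal_expansion[OF cols] by (intro sum.cong refl) auto
    also have "\<dots> = (\<Sum>i\<in>{1..n}. \<Sum>j\<in>{1..n}. \<alpha> j * (A k i * v j i))"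
      by (simp add: sum_distrib_left mult_ac)
    also have "\<dots> = (\<Sum>j\<in>{1..n}. \<alpha> j * (\<Sum>i\<in>{1..n}. A k i * v j i))"
      by (subst sum.swap) (simp add: sum_distrib_left)
    also have "\<dots> = (\<Sum>j\<in>{1..n}. \<alpha> j * lam j * v j k)"
      using eig k by (auto simp: eigenpairs_def intro!: sum.cong)
    finally show ?thesis .
  qed
  have "(\<Sum>k\<in>{1..n}. \<Sum>i\<in>{1..n}. c k * A k i * c i)
      = (\<Sum>k\<in>{1..n}. c k * (\<Sum>i\<in>{1..n}. A k i * c i))"
    by (simp add: sum_distrib_left mult.assoc)
  also have "\<dots> = (\<Sum>k\<in>{1..n}. \<Sum>j\<in>{1..n}. \<alpha> j * lam j * (c k * v j k))"
    using Ac by (auto simp: sum_distrib_left mult_ac intro!: sum.cong)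
  also have "\<dots> = (\<Sum>j\<in>{1..n}. lam j * (\<alpha> j)\<^sup>2)"
    unfolding \<alpha>_def by (subst sum.swap) (simp add: sum_distrib_left power2_eq_square mult_ac)
  finally show ?thesis unfolding \<alpha>_def .
qed

lemma rayleigh_bound:
  assumes eig: "eigenpairs n A lam v" and cols: "orthonormal_rows n (\<lambda>a j. v j a)"
    and le: "\<forall>j\<in>{1..n}. lam j \<le> L"
  shows "(\<Sum>k\<in>{1..n}. \<Sum>i\<in>{1..n}. c k * A k i * c i) \<le> L * (\<Sum>k\<in>{1..n}. (c k)\<^sup>2)"
proof -
  have "(\<Sum>k\<in>{1..n}. \<Sum>i\<in>{1..n}. c k * A k i * c i)
      = (\<Sum>j\<in>{1..n}. lam j * (\<Sum>a\<in>{1..n}. c a * v j a)\<^sup>2)"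
    by (rule eigen_quadratic_form[OF eig cols])
  also have "\<dots> \<le> (\<Sum>j\<in>{1..n}. L * (\<Sum>a\<in>{1..n}. c a * v j a)\<^sup>2)"
    using le by (intro sum_mono mult_right_mono) auto
  also have "\<dots> = L * (\<Sum>k\<in>{1..n}. (c k)\<^sup>2)"
    using orthonormal_parseval[OF cols, of c] by (simp add: sum_distrib_left[symmetric])
  finally show ?thesis .
qed

lemma trace_eq_sum_eigenvalues:
  assumes eig: "eigenpairs n A lam v" and rows: "orthonormal_rows n v"
  shows "(\<Sum>j\<in>{1..n}. lam j) = (\<Sum>k\<in>{1..n}. A k k)"
proof -
  have cols: "orthonormal_rows n (\<lambda>a j. v j a)"
    by (rule orthonormal_rows_transpose[OF rows])
  have "lam j = (\<Sum>k\<in>{1..n}. \<Sum>i\<in>{1..n}. A k i * (v j k * v j i))" if j: "j \<in> {1..n}" for j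
proof -
    have "lam j = (\<Sum>k\<in>{1..n}. v j k * (lam j * v j k))"
      using rows j by (simp add: orthonormal_rows_def sum_distrib_left[symmetric] mult_ac)
    also have "\<dots> = (\<Sum>k\<in>{1..n}. v j k * (\<Sum>i\<in>{1..n}. A k i * v j i))"
      using eig j by (auto simp: eigenpairs_def intro!: sum.cong)
    finally show ?thesis by (simp add: sum_distrib_left mult_ac)
  qed
  then have "(\<Sum>j\<in>{1..n}. lam j)
      = (\<Sum>j\<in>{1..n}. \<Sum>k\<in>{1..n}. \<Sum>i\<in>{1..n}. A k i * (v j k * v j i))"
    by simp
  also have "\<dots> = (\<Sum>k\<in>{1..n}. \<Sum>i\<in>{1..n}. \<Sum>j\<in>{1..n}. A k i * (v j k * v j i))"
    by (subst sum.swap) (intro sum.cong refl sum.swap)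
  also have "\<dots> = (\<Sum>k\<in>{1..n}. \<Sum>i\<in>{1..n}. A k i * (\<Sum>j\<in>{1..n}. v j k * v j i))"
    by (simp add: sum_distrib_left)
  also have "\<dots> = (\<Sum>k\<in>{1..n}. \<Sum>i\<in>{1..n}. A k i * (if k = i then 1 else 0))"
    using cols by (intro sum.cong) (auto simp: orthonormal_rows_def)
  also have "\<dots> = (\<Sum>k\<in>{1..n}. A k k)" by (simp add: if_distrib cong: if_cong)
  finally show ?thesis .
qed

section \<open>Gram matrices of vectors in an inner product space\<close>

lemma gram_realisation:
  assumes "rkhs_realisation \<kappa> \<Phi>"
  shows "gram \<kappa> p = (\<lambda>k i. inner (\<Phi> (p k)) (\<Phi> (p i)))"
  using assms by (intro ext) (simp add: rkhs_realisation_def gram_def)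

lemma gram_bilinear_form:
  fixes P :: "nat \<Rightarrow> 'h::real_inner"
  shows "(\<Sum>k\<in>S. \<Sum>i\<in>S. c k * inner (P k) (P i) * d i)
       = inner (\<Sum>k\<in>S. c k *\<^sub>R P k) (\<Sum>i\<in>S. d i *\<^sub>R P i)"
proof -
  have "inner (\<Sum>k\<in>S. c k *\<^sub>R P k) (\<Sum>i\<in>S. d i *\<^sub>R P i)
      = (\<Sum>k\<in>S. \<Sum>i\<in>S. inner (c k *\<^sub>R P k) (d i *\<^sub>R P i))"
    by (simp only: inner_sum_left inner_sum_right) (rule sum.swap)
  then show ?thesis by (simp add: mult_ac)
qed

text \<open>Frame bound: if the Gram quadratic form is bounded by L |c|^2, then the analysis map
  g |-> (<P_a, g>)_a has squared norm at most L |g|^2 (the adjoint bound, via Cauchy-Schwarz).\<close>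
lemma frame_bound_of_gram_bound:
  fixes P :: "nat \<Rightarrow> 'h::real_inner"
  assumes gram_le: "\<And>c. (\<Sum>k\<in>S. \<Sum>i\<in>S. c k * inner (P k) (P i) * c i) \<le> L * (\<Sum>k\<in>S. (c k)\<^sup>2)"
    and L: "0 \<le> L"
  shows "(\<Sum>a\<in>S. (inner (P a) g)\<^sup>2) \<le> L * (norm g)\<^sup>2"
proof -
  define c where "c a = inner (P a) g" for a
  define s where "s = (\<Sum>a\<in>S. (c a)\<^sup>2)"
  define w where "w = (\<Sum>k\<in>S. c k *\<^sub>R P k)"
  have s0: "0 \<le> s" unfolding s_def by (simp add: sum_nonneg)
  have "s = inner w g" unfolding s_def w_def c_def
    by (simp add: inner_sum_left power2_eq_square)
  also have "\<dots> \<le> norm w * norm g" by (rule norm_cauchy_schwarz)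
  finally have "s\<^sup>2 \<le> (norm w)\<^sup>2 * (norm g)\<^sup>2"
    using s0 by (metis power_mono power_mult_distrib)
  also have "\<dots> \<le> (L * s) * (norm g)\<^sup>2"
    using gram_le[of c] unfolding gram_bilinear_form s_def w_def
    by (intro mult_right_mono) (auto simp: power2_norm_eq_inner)
  finally have "s * s \<le> s * (L * (norm g)\<^sup>2)" by (simp add: power2_eq_square mult_ac)
  have "s \<le> L * (norm g)\<^sup>2"
  proof (cases "s = 0")
    case True
    then show ?thesis using L by simp
  next
    case False
    then have "0 < s" using s0 by simp
    then show ?thesis using \<open>s * s \<le> s * (L * (norm g)\<^sup>2)\<close> by (simp add: mult_le_cancel_left_pos)
  qed
  then show ?thesis unfolding s_def c_def .
qed

lemma gram_eigenvector_inner: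
  fixes P :: "nat \<Rightarrow> 'h::real_inner"
  assumes eig: "eigenpairs n (\<lambda>k i. inner (P k) (P i)) lam v" and rows: "orthonormal_rows n v"
    and j: "j \<in> {1..n}" and l: "l \<in> {1..n}"
  shows "inner (\<Sum>i\<in>{1..n}. v j i *\<^sub>R P i) (\<Sum>i\<in>{1..n}. v l i *\<^sub>R P i)
       = (if j = l then lam l else 0)"
proof -
  have "inner (\<Sum>i\<in>{1..n}. v j i *\<^sub>R P i) (\<Sum>i\<in>{1..n}. v l i *\<^sub>R P i)
      = (\<Sum>k\<in>{1..n}. v j k * (\<Sum>i\<in>{1..n}. inner (P k) (P i) * v l i))"
    by (simp add: gram_bilinear_form[symmetric] sum_distrib_left mult.assoc)
  also have "\<dots> = (\<Sum>k\<in>{1..n}. v j k * (lam l * v l k))"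
    using eig l by (intro sum.cong refl) (auto simp: eigenpairs_def)
  also have "\<dots> = lam l * (\<Sum>k\<in>{1..n}. v j k * v l k)"
    by (simp add: sum_distrib_left mult_ac)
  also have "\<dots> = (if j = l then lam l else 0)"
    using rows j l by (simp add: orthonormal_rows_def)
  finally show ?thesis .
qed

text \<open>Gram matrices are positive semidefinite, so their eigenvalues are nonnegative.\<close>
lemma gram_eigenvalue_nonneg:
  fixes P :: "nat \<Rightarrow> 'h::real_inner"
  assumes "eigenpairs n (\<lambda>k i. inner (P k) (P i)) lam v" "orthonormal_rows n v" "j \<in> {1..n}"
  shows "0 \<le> lam j"
  using gram_eigenvector_inner[OF assms assms(3)] by (metis inner_ge_zero)

text \<open>For unit-bounded vectors the top Gram eigenvalue is at most the dimension:
  lam_1 <= trace G = sum_k |P_k|^2 <= n.\<close>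
lemma top_gram_eigenvalue_le_dim:
  fixes P :: "nat \<Rightarrow> 'h::real_inner"
  assumes dec: "sorted_eigendecomp n (\<lambda>k i. inner (P k) (P i)) lam v" and n: "1 \<le> n"
    and unit: "\<forall>k\<in>{1..n}. inner (P k) (P k) \<le> 1"
  shows "lam 1 \<le> real n"
proof -
  have eig: "eigenpairs n (\<lambda>k i. inner (P k) (P i)) lam v" and rows: "orthonormal_rows n v"
    using dec by (auto simp: sorted_eigendecomp_iff)
  have "lam 1 \<le> (\<Sum>j\<in>{1..n}. lam j)"
    using n gram_eigenvalue_nonneg[OF eig rows] by (intro member_le_sum) auto
  also have "\<dots> = (\<Sum>k\<in>{1..n}. inner (P k) (P k))"
    using trace_eq_sum_eigenvalues[OF eig rows] by simp
  also have "\<dots> \<le> (\<Sum>k\<in>{1..n}. 1)"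
    using unit by (intro sum_mono) auto
  finally show ?thesis by simp
qed

lemma orthogonal_family_card_le:
  fixes w P :: "nat \<Rightarrow> 'h::real_inner"
  assumes orth: "\<forall>j\<in>{1..r}. \<forall>l\<in>{1..r}. j \<noteq> l \<longrightarrow> inner (w j) (w l) = 0"
    and nonzero: "\<forall>j\<in>{1..r}. w j \<noteq> 0"
    and sub: "w ` {1..r} \<subseteq> span (P ` {1..N})"
  shows "r \<le> N"
proof -
  have inj: "inj_on w {1..r}"
  proof (rule inj_onI, rule ccontr)
    fix j l assume j: "j \<in> {1..r}" and "l \<in> {1..r}" "w j = w l" "j \<noteq> l"
    then have "inner (w j) (w j) = 0" using orth by metis
    then show False using nonzero j by simp
  qed
  have "pairwise real_inner_class.orthogonal (w ` {1..r})"
    using orth by (auto simp: pairwise_def real_inner_class.orthogonal_def)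
  then have "independent (w ` {1..r})"
    using nonzero by (intro pairwise_orthogonal_independent) auto
  then have "card (w ` {1..r}) \<le> card (P ` {1..N})"
    using independent_span_bound[OF _ _ sub] by simp
  also have "\<dots> \<le> N" using card_image_le[of "{1..N}" P] by simp
  finally show ?thesis using card_image[OF inj] by simp
qed

text \<open>The number r of positive eigenvalues of the Gram matrix of a sample drawn from
  x_1, ..., x_N is at most N: the corresponding eigenvectors give r orthogonal nonzero vectors
  in the span of the N features.\<close>
lemma positive_gram_eigenvalues_le_population:
  fixes \<Phi> :: "'a \<Rightarrow> 'h::real_inner"
  assumes eig: "eigenpairs m (\<lambda>k i. inner (\<Phi> (xh k)) (\<Phi> (xh i))) lamh u"
    and rows: "orthonormal_rows m u"
    and pos: "\<forall>j\<in>{1..r}. 0 < lamh j" and rm: "r \<le> m"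
    and sample: "\<forall>i\<in>{1..m}. xh i \<in> x ` {1..N}"
  shows "r \<le> N"
proof (rule orthogonal_family_card_le)
  define w where "w j = (\<Sum>i\<in>{1..m}. u j i *\<^sub>R \<Phi> (xh i))" for j
  have ww: "inner (w j) (w l) = (if j = l then lamh l else 0)" if "j \<in> {1..r}" "l \<in> {1..r}" for j l
    unfolding w_def using gram_eigenvector_inner[OF eig rows] that rm by auto
  show "\<forall>j\<in>{1..r}. \<forall>l\<in>{1..r}. j \<noteq> l \<longrightarrow> inner (w j) (w l) = 0"
    using ww by simp
  show "\<forall>j\<in>{1..r}. w j \<noteq> 0"
  proof
    fix j assume j: "j \<in> {1..r}"
    then have "inner (w j) (w j) = lamh j" using ww by simp
    moreover have "0 < lamh j" using pos j by blast
    ultimately show "w j \<noteq> 0" by auto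
  qed
  have "\<Phi> (xh i) \<in> span ((\<lambda>k. \<Phi> (x k)) ` {1..N})" if "i \<in> {1..m}" for i
    using sample that by (fastforce intro: span_base)
  then show "w ` {1..r} \<subseteq> span ((\<lambda>k. \<Phi> (x k)) ` {1..N})"
    unfolding w_def by (auto intro!: span_sum span_scale)
qed

section \<open>The truncated matrices as matrix elements of the projections\<close>

text \<open>H_r is a finite-rank, hence bounded, linear operator; so Delta H has a finite operator norm.\<close>
lemma bounded_linear_proj_op: "bounded_linear (proj_op r \<phi>)"
proof -
  have "bounded_linear (\<lambda>f. \<Sum>i\<in>{1..r}. inner (\<phi> i) f *\<^sub>R \<phi> i)"
    by (intro bounded_linear_sum bounded_linear_compose[OF bounded_linear_scaleR_left]
        bounded_linear_inner_right)
  then show ?thesis unfolding proj_op_def[abs_def] .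
qed

lemma inner_proj_op:
  "inner g (proj_op r \<phi> f) = (\<Sum>j\<in>{1..r}. inner (\<phi> j) f * inner (\<phi> j) g)"
  unfolding proj_op_def by (simp add: inner_sum_right inner_commute)

lemma inner_eigfun:
  "inner (eigfun \<Phi> p n lam v j) y = (\<Sum>i\<in>{1..n}. v j i * inner (\<Phi> (p i)) y) / sqrt (lam j)"
  unfolding eigfun_def by (simp add: inner_sum_left)

text \<open>K_r(a, b) = <P_a, H_r P_b>: on the data points phi_j has coefficients sqrt(lam_j) v_j,
  because K v_j = lam_j v_j.\<close>
lemma trunc_mat_eq_proj_inner:
  fixes \<Phi> :: "'a \<Rightarrow> 'h::real_inner"
  assumes eig: "eigenpairs N (\<lambda>k i. inner (\<Phi> (x k)) (\<Phi> (x i))) lam v"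
    and rN: "r \<le> N" and pos: "\<forall>j\<in>{1..r}. 0 < lam j"
    and a: "a \<in> {1..N}" and b: "b \<in> {1..N}"
  shows "trunc_mat r lam v a b = inner (\<Phi> (x a)) (proj_op r (eigfun \<Phi> x N lam v) (\<Phi> (x b)))"
proof -
  have coeff: "inner (eigfun \<Phi> x N lam v j) (\<Phi> (x c)) = sqrt (lam j) * v j c"
    if j: "j \<in> {1..r}" and c: "c \<in> {1..N}" for j c
proof -
    have "(\<Sum>i\<in>{1..N}. v j i * inner (\<Phi> (x i)) (\<Phi> (x c)))
        = (\<Sum>i\<in>{1..N}. inner (\<Phi> (x c)) (\<Phi> (x i)) * v j i)"
      by (simp add: inner_commute mult.commute)
    also have "\<dots> = lam j * v j c"
      using eig j c rN by (simp add: eigenpairs_def)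
    finally have "inner (eigfun \<Phi> x N lam v j) (\<Phi> (x c)) = lam j * v j c / sqrt (lam j)"
      by (simp only: inner_eigfun)
    also have "\<dots> = lam j / sqrt (lam j) * v j c" by simp
    also have "\<dots> = sqrt (lam j) * v j c"
    proof -
      have "0 < lam j" using pos j by blast
      then show ?thesis by (simp only: real_div_sqrt less_imp_le)
    qed
    finally show ?thesis .
  qed
  have "inner (\<Phi> (x a)) (proj_op r (eigfun \<Phi> x N lam v) (\<Phi> (x b)))
      = (\<Sum>j\<in>{1..r}. sqrt (lam j) * v j b * (sqrt (lam j) * v j a))"
    using coeff a b by (simp add: inner_proj_op)
  also have "\<dots> = (\<Sum>j\<in>{1..r}. lam j * v j a * v j b)"
  proof (intro sum.cong refl)
    fix j assume "j \<in> {1..r}"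
    then have "0 < lam j" using pos by blast
    then show "sqrt (lam j) * v j b * (sqrt (lam j) * v j a) = lam j * v j a * v j b"
      by (simp add: algebra_simps)
  qed
  finally show ?thesis unfolding trunc_mat_def ..
qed

text \<open>Likewise the Nystrom matrix is K_b W K_b^T(a, b) = <P_a, H_r-hat P_b>: on P_c the
  sample eigenfunction phi-hat_j takes the value (K_b u_j)_c / sqrt(lam-hat_j).\<close>
lemma nystrom_eq_proj_inner:
  fixes \<Phi> :: "'a \<Rightarrow> 'h::real_inner"
  assumes kernel: "\<forall>y z. \<kappa> y z = inner (\<Phi> y) (\<Phi> z)" and pos: "\<forall>j\<in>{1..r}. 0 < lamh j"
  shows "nystrom \<kappa> x m xh (trunc_pinv r lamh u) a b
       = inner (\<Phi> (x a)) (proj_op r (eigfun \<Phi> xh m lamh u) (\<Phi> (x b)))"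
proof -
  define \<beta> where "\<beta> c j = (\<Sum>i\<in>{1..m}. u j i * \<kappa> (x c) (xh i))" for c j
  have "inner (\<Phi> (xh i)) (\<Phi> (x c)) = \<kappa> (x c) (xh i)" for i c
    using kernel by (simp add: inner_commute)
  then have coeff: "inner (eigfun \<Phi> xh m lamh u j) (\<Phi> (x c)) = \<beta> c j / sqrt (lamh j)" for j c
    by (simp add: inner_eigfun \<beta>_def)
  have "inner (\<Phi> (x a)) (proj_op r (eigfun \<Phi> xh m lamh u) (\<Phi> (x b)))
      = (\<Sum>j\<in>{1..r}. \<beta> b j / sqrt (lamh j) * (\<beta> a j / sqrt (lamh j)))"
    by (simp add: inner_proj_op coeff)
  also have "\<dots> = (\<Sum>j\<in>{1..r}. inverse (lamh j) * \<beta> a j * \<beta> b j)"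
  proof (intro sum.cong refl)
    fix j assume "j \<in> {1..r}"
    then have "0 < lamh j" using pos by blast
    then show "\<beta> b j / sqrt (lamh j) * (\<beta> a j / sqrt (lamh j)) = inverse (lamh j) * \<beta> a j * \<beta> b j"
      by (simp add: field_simps)
  qed
  also have "\<dots> = (\<Sum>j\<in>{1..r}. \<Sum>c\<in>{1..m}. \<Sum>d\<in>{1..m}.
      \<kappa> (x a) (xh c) * (inverse (lamh j) * u j c * u j d) * \<kappa> (x b) (xh d))"
    unfolding \<beta>_def by (simp add: sum_product sum_distrib_left mult_ac)
  also have "\<dots> = (\<Sum>c\<in>{1..m}. \<Sum>d\<in>{1..m}. \<Sum>j\<in>{1..r}.
      \<kappa> (x a) (xh c) * (inverse (lamh j) * u j c * u j d) * \<kappa> (x b) (xh d))"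
    by (subst sum.swap) (intro sum.cong refl sum.swap)
  also have "\<dots> = nystrom \<kappa> x m xh (trunc_pinv r lamh u) a b"
    unfolding nystrom_def trunc_pinv_def by (simp add: sum_distrib_left sum_distrib_right)
  finally show ?thesis ..
qed

section \<open>From matrix elements to the Frobenius norm\<close>

text \<open>If the entries of E are matrix elements <P_a, T P_b> of a bounded operator T between
  unit-bounded vectors satisfying the frame bound with constant L, then
  ||E||_F <= sqrt(L n) ||T||: each column contributes at most L |T P_b|^2 <= L ||T||^2.\<close>
lemma frob_norm_le_onorm:
  fixes P :: "nat \<Rightarrow> 'h::real_inner" and T :: "'h \<Rightarrow> 'h"
  assumes T: "bounded_linear T"
    and entries: "\<forall>a\<in>{1..n}. \<forall>b\<in>{1..n}. \<bar>E a b\<bar> = \<bar>inner (P a) (T (P b))\<bar>"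
    and frame: "\<And>g. (\<Sum>a\<in>{1..n}. (inner (P a) g)\<^sup>2) \<le> L * (norm g)\<^sup>2"
    and L: "0 \<le> L" and unit: "\<forall>b\<in>{1..n}. norm (P b) \<le> 1"
  shows "frob_norm n n E \<le> sqrt (L * real n) * onorm T"
proof -
  have T0: "0 \<le> onorm T" by (rule onorm_pos_le[OF T])
  have column: "norm (T (P b)) \<le> onorm T" if "b \<in> {1..n}" for b
proof -
    have "norm (T (P b)) \<le> onorm T * norm (P b)" by (rule onorm[OF T])
    also have "\<dots> \<le> onorm T" using T0 unit that by (simp add: mult_left_le)
    finally show ?thesis .
  qed
  have "(\<Sum>a\<in>{1..n}. \<Sum>b\<in>{1..n}. (E a b)\<^sup>2) = (\<Sum>b\<in>{1..n}. \<Sum>a\<in>{1..n}. (inner (P a) (T (P b)))\<^sup>2)"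
    using entries by (subst sum.swap) (intro sum.cong refl, metis power2_abs)
  also have "\<dots> \<le> (\<Sum>b\<in>{1..n}. L * (norm (T (P b)))\<^sup>2)"
    by (intro sum_mono frame)
  also have "\<dots> \<le> (\<Sum>b\<in>{1..n}. L * (onorm T)\<^sup>2)"
    using L column by (intro sum_mono mult_left_mono power_mono) auto
  also have "\<dots> = (sqrt (L * real n) * onorm T)\<^sup>2"
    using L by (simp add: power_mult_distrib)
  finally show ?thesis
    unfolding frob_norm_def using T0 L by (intro real_le_lsqrt) auto
qed

theorem theorem2:
  fixes \<kappa> :: "'a \<Rightarrow> 'a \<Rightarrow> real"
    and \<Phi> :: "'a \<Rightarrow> 'h::{real_inner,complete_space}"
    and x :: "nat \<Rightarrow> 'a" and xh :: "nat \<Rightarrow> 'a"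
    and N m r :: nat
    and lam :: "nat \<Rightarrow> real" and v :: "nat \<Rightarrow> nat \<Rightarrow> real"
    and lamh :: "nat \<Rightarrow> real" and u :: "nat \<Rightarrow> nat \<Rightarrow> real"
  assumes kpsd: "psd_kernel \<kappa>"
    and kbound: "\<forall>z. \<kappa> z z \<le> 1"
    and rkhs: "rkhs_realisation \<kappa> \<Phi>"
    and Kpd: "pos_def_mat N (gram \<kappa> x)"
    and Keig: "sorted_eigendecomp N (gram \<kappa> x) lam v"
    and sample: "\<forall>i\<in>{1..m}. xh i \<in> x ` {1..N}"
    and Kheig: "sorted_eigendecomp m (gram \<kappa> xh) lamh u"
    and r1: "1 \<le> r" and rm: "r \<le> m"
    and lampos: "lam r > 0" and lamhpos: "lamh r > 0"
  shows "frob_norm N N (\<lambda>i j. nystrom \<kappa> x m xh (trunc_pinv r lamh u) i j - trunc_mat r lam v i j)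
           \<le> sqrt (lam 1 * real N) *
              onorm (\<lambda>f. proj_op r (eigfun \<Phi> x N lam v) f - proj_op r (eigfun \<Phi> xh m lamh u) f)
      \<and> sqrt (lam 1 * real N) *
              onorm (\<lambda>f. proj_op r (eigfun \<Phi> x N lam v) f - proj_op r (eigfun \<Phi> xh m lamh u) f)
           \<le> real N *
              onorm (\<lambda>f. proj_op r (eigfun \<Phi> x N lam v) f - proj_op r (eigfun \<Phi> xh m lamh u) f)"
proof -
  let ?\<Delta> = "\<lambda>f. proj_op r (eigfun \<Phi> x N lam v) f - proj_op r (eigfun \<Phi> xh m lamh u) f"
  have bounded: "bounded_linear ?\<Delta>" by (intro bounded_linear_sub bounded_linear_proj_op)
  have kernel: "\<forall>y z. \<kappa> y z = inner (\<Phi> y) (\<Phi> z)"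
    using rkhs by (simp add: rkhs_realisation_def)
  have dec: "sorted_eigendecomp N (\<lambda>k i. inner (\<Phi> (x k)) (\<Phi> (x i))) lam v"
    and dech: "sorted_eigendecomp m (\<lambda>k i. inner (\<Phi> (xh k)) (\<Phi> (xh i))) lamh u"
    using Keig Kheig by (simp_all add: gram_realisation[OF rkhs])
  then have eig: "eigenpairs N (\<lambda>k i. inner (\<Phi> (x k)) (\<Phi> (x i))) lam v"
    and rows: "orthonormal_rows N v"
    and eigh: "eigenpairs m (\<lambda>k i. inner (\<Phi> (xh k)) (\<Phi> (xh i))) lamh u"
    and rowsh: "orthonormal_rows m u"
    by (simp_all add: sorted_eigendecomp_iff)
  have hpos: "\<forall>j\<in>{1..r}. 0 < lamh j" by (rule sorted_eigendecomp_pos_prefix[OF Kheig rm lamhpos])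
  have rN: "r \<le> N"
    by (rule positive_gram_eigenvalues_le_population[OF eigh rowsh hpos rm sample])
  have pos: "\<forall>j\<in>{1..r}. 0 < lam j" by (rule sorted_eigendecomp_pos_prefix[OF Keig rN lampos])
  then have L: "0 < lam 1" using r1 by auto
  have top: "\<forall>j\<in>{1..N}. lam j \<le> lam 1" using dec r1 rN by (auto simp: sorted_eigendecomp_iff)
  have unit: "\<forall>k\<in>{1..N}. inner (\<Phi> (x k)) (\<Phi> (x k)) \<le> 1" using kbound kernel by simp
  have entries: "\<forall>a\<in>{1..N}. \<forall>b\<in>{1..N}.
      \<bar>nystrom \<kappa> x m xh (trunc_pinv r lamh u) a b - trunc_mat r lam v a b\<bar>
      = \<bar>inner (\<Phi> (x a)) (?\<Delta> (\<Phi> (x b)))\<bar>"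
    using nystrom_eq_proj_inner[OF kernel hpos] trunc_mat_eq_proj_inner[where \<Phi>=\<Phi> and x=x, OF eig rN pos]
    by (simp add: inner_diff_right abs_minus_commute)
  have frame: "(\<Sum>a\<in>{1..N}. (inner (\<Phi> (x a)) g)\<^sup>2) \<le> lam 1 * (norm g)\<^sup>2" for g
    using frame_bound_of_gram_bound[OF rayleigh_bound[OF eig orthonormal_rows_transpose[OF rows] top]] L
    by simp
  have "frob_norm N N (\<lambda>i j. nystrom \<kappa> x m xh (trunc_pinv r lamh u) i j - trunc_mat r lam v i j)
      \<le> sqrt (lam 1 * real N) * onorm ?\<Delta>"
    using unit L by (intro frob_norm_le_onorm[OF bounded entries frame]) (auto simp: norm_eq_sqrt_inner)
  moreover have "sqrt (lam 1 * real N) \<le> real N"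
proof -
    have "lam 1 \<le> real N" using top_gram_eigenvalue_le_dim[OF dec _ unit] r1 rN by simp
    then have "sqrt (lam 1 * real N) \<le> sqrt (real N * real N)"
      by (intro real_sqrt_le_mono mult_right_mono) auto
    then show ?thesis by simp
  qed
  moreover have "0 \<le> onorm ?\<Delta>" by (rule onorm_pos_le[OF bounded])
  ultimately show ?thesis by (blast intro: mult_right_mono)
qed

end
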